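(* Let $\mathcal{R}$ be the involutive system $u_{ij}=f_{ij}(x^1,x^2,x^3,u,u_i,u_j)$, $1\le i<j\le3$, let $\Theta=\mu\theta$ satisfy on $\mathcal{R}^\infty$ the system $X_lX_k(\Theta)+A^l_{lk}X_l(\Theta)+A^k_{lk}X_k(\Theta)+C_{lk}\Theta=0$ ($1\le l\ne k\le3$), and let $\xi_{ij}=X_j(\Theta)+A^i_{ij}\Theta$ be the $(i,j)$ Laplace transform of $\Theta$ for an ordered pair $i\ne j$. Let $\hat A^j_{ij}$ denote the coefficient of $X_j(\xi_{ij})$ in the $(i,j)$ equation $X_iX_j(\xi_{ij})+\hat A^i_{ij}X_i(\xi_{ij})+\hat A^j_{ij}X_j(\xi_{ij})+\hat C_{ij}\xi_{ij}=0$ of the system satisfied by $\xi_{ij}$, and let $\mathcal{X}_{ji}(\xi_{ij})=X_i(\xi_{ij})+\hat A^j_{ij}\xi_{ij}$ be the $(j,i)$ Laplace transform of $\xi_{ij}$ with respect to that system. If $H_{ij}\neq0$, then the $(i,j)$ Laplace transform has an inverse given by $\Theta=\frac{1}{H_{ij}}\,\mathcal{X}_{ji}(\xi_{ij}).$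
   Context: Setting: $U\subset\mathbb{R}^3$ open connected, $E=U\times(a,b)\to U$ trivial bundle, $J^\infty(E)$ with contact forms $\theta_I=du_I-\sum_ju_{Ij}dx^j$, $\theta=du-\sum_iu_idx^i$. $\mathcal{R}$: $F_{ij}:=u_{ij}-f_{ij}(x^1,x^2,x^3,u,u_i,u_j)=0$, $1\le i<j\le3$, $f_{ij}$ smooth with $D_kf_{ij}=D_if_{kj}$ for distinct $i,j,k$; $\mathcal{R}^\infty$ its infinite prolongation; $X_i=D_i$ the commuting total derivatives on $\mathcal{R}^\infty$, acting on contact forms by projected Lie derivative, $X_j(\theta_I)=\theta_{Ij}$. With $a^i_{ij}=\partial F_{ij}/\partial u_i$, $a^j_{ij}=\partial F_{ij}/\partial u_j$, $c_{ij}=\partial F_{ij}/\partial u$ and a nonvanishing function $\mu$, $\Theta=\mu\theta$ satisfies the system above with $A^i_{ij}=a^i_{ij}-X_j(\mu)/\mu$, $A^j_{ij}=a^j_{ij}-X_i(\mu)/\mu$, $C_{ij}=c_{ij}-X_iX_j(\mu)/\mu-a^i_{ij}X_i(\mu)/\mu-a^j_{ij}X_j(\mu)/\mu+2X_i(\mu)X_j(\mu)/\mu^2$, coefficients symmetric in lower indices. Laplace invariant: $H_{ij}=D_i(A^i_{ij})+A^i_{ij}A^j_{ij}-C_{ij}$. *)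

theory Defs
  imports Main
begin

text \<open>Abstract algebraic model of the setting on the infinite prolongation R-infinity.
  'f : ring of (smooth) functions on R-infinity; 'm : module of contact forms on R-infinity;
  sm : multiplication of forms by functions; D k : total derivative X_k on functions;
  X k : total derivative X_k acting on contact forms (projected Lie derivative);
  th : the contact form theta; a l i j : a^l_{ij} = dF_{ij}/du_l; c i j : c_{ij} = dF_{ij}/du.\<close>

definition module_ax :: "('f::comm_ring_1 \<Rightarrow> 'm::ab_group_add \<Rightarrow> 'm) \<Rightarrow> bool" where
  "module_ax sm \<longleftrightarrow>
     (\<forall>f g m. sm (f + g) m = sm f m + sm g m) \<and>
     (\<forall>f m n. sm f (m + n) = sm f m + sm f n) \<and>
     (\<forall>f g m. sm (f * g) m = sm f (sm g m)) \<and>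
     (\<forall>m. sm 1 m = m)"

definition function_derivations :: "(nat \<Rightarrow> 'f::comm_ring_1 \<Rightarrow> 'f) \<Rightarrow> bool" where
  "function_derivations D \<longleftrightarrow>
     (\<forall>k\<in>{1,2,3}. \<forall>f g. D k (f + g) = D k f + D k g \<and> D k (f * g) = D k f * g + f * D k g) \<and>
     (\<forall>k\<in>{1,2,3}. \<forall>l\<in>{1,2,3}. \<forall>f. D k (D l f) = D l (D k f))"

definition form_derivations ::
  "(nat \<Rightarrow> 'f::comm_ring_1 \<Rightarrow> 'f) \<Rightarrow> (nat \<Rightarrow> 'm::ab_group_add \<Rightarrow> 'm) \<Rightarrow> ('f \<Rightarrow> 'm \<Rightarrow> 'm) \<Rightarrow> bool" where
  "form_derivations D X sm \<longleftrightarrow>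
     (\<forall>k\<in>{1,2,3}. \<forall>m n. X k (m + n) = X k m + X k n) \<and>
     (\<forall>k\<in>{1,2,3}. \<forall>f m. X k (sm f m) = sm (D k f) m + sm f (X k m)) \<and>
     (\<forall>k\<in>{1,2,3}. \<forall>l\<in>{1,2,3}. \<forall>m. X k (X l m) = X l (X k m))"

text \<open>Pure multi-indices: (0,0) stands for the empty index (theta itself), (k,n) with n \<ge> 1
  for the index k...k (n times). On R-infinity the contact forms theta_I with I pure form a basis.\<close>

definition pure_idx :: "(nat \<times> nat) set" where
  "pure_idx = {(0, 0)} \<union> {(k, n). k \<in> {1,2,3} \<and> 1 \<le> n}"

definition theta_pure :: "(nat \<Rightarrow> 'm \<Rightarrow> 'm) \<Rightarrow> 'm \<Rightarrow> nat \<times> nat \<Rightarrow> 'm" where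
  "theta_pure X th I = (X (fst I) ^^ snd I) th"

definition pure_basis ::
  "(nat \<Rightarrow> 'm::ab_group_add \<Rightarrow> 'm) \<Rightarrow> ('f::comm_ring_1 \<Rightarrow> 'm \<Rightarrow> 'm) \<Rightarrow> 'm \<Rightarrow> bool" where
  "pure_basis X sm th \<longleftrightarrow>
     (\<forall>S g. finite S \<and> S \<subseteq> pure_idx \<and> (\<Sum>I\<in>S. sm (g I) (theta_pure X th I)) = 0
              \<longrightarrow> (\<forall>I\<in>S. g I = 0)) \<and>
     (\<forall>m. \<exists>S g. finite S \<and> S \<subseteq> pure_idx \<and> m = (\<Sum>I\<in>S. sm (g I) (theta_pure X th I)))"

definition Rinf_setting ::
  "(nat \<Rightarrow> 'f::comm_ring_1 \<Rightarrow> 'f) \<Rightarrow> (nat \<Rightarrow> 'm::ab_group_add \<Rightarrow> 'm) \<Rightarrow> ('f \<Rightarrow> 'm \<Rightarrow> 'm)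
    \<Rightarrow> 'm \<Rightarrow> (nat \<Rightarrow> nat \<Rightarrow> nat \<Rightarrow> 'f) \<Rightarrow> (nat \<Rightarrow> nat \<Rightarrow> 'f) \<Rightarrow> bool" where
  "Rinf_setting D X sm th a c \<longleftrightarrow>
     module_ax sm \<and> function_derivations D \<and> form_derivations D X sm \<and> pure_basis X sm th \<and>
     (\<forall>l i j. a l i j = a l j i) \<and> (\<forall>i j. c i j = c j i) \<and>
     (\<forall>i\<in>{1,2,3}. \<forall>j\<in>{1,2,3}. i \<noteq> j \<longrightarrow>
        X i (X j th) + sm (a i i j) (X i th) + sm (a j i j) (X j th) + sm (c i j) th = 0)"

text \<open>Coefficients of the system for Theta = mu theta; mui is the inverse of mu.
  Acoef l i j = A^l_{ij} for l \<in> {i,j}.\<close>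

definition Acoef :: "(nat \<Rightarrow> 'f::comm_ring_1 \<Rightarrow> 'f) \<Rightarrow> (nat \<Rightarrow> nat \<Rightarrow> nat \<Rightarrow> 'f) \<Rightarrow> 'f \<Rightarrow> 'f
    \<Rightarrow> nat \<Rightarrow> nat \<Rightarrow> nat \<Rightarrow> 'f" where
  "Acoef D a mu mui l i j = a l i j - D (if l = i then j else i) mu * mui"

definition Ccoef :: "(nat \<Rightarrow> 'f::comm_ring_1 \<Rightarrow> 'f) \<Rightarrow> (nat \<Rightarrow> nat \<Rightarrow> nat \<Rightarrow> 'f) \<Rightarrow> (nat \<Rightarrow> nat \<Rightarrow> 'f)
    \<Rightarrow> 'f \<Rightarrow> 'f \<Rightarrow> nat \<Rightarrow> nat \<Rightarrow> 'f" where
  "Ccoef D a c mu mui i j = c i j - D i (D j mu) * mui - a i i j * D i mu * mui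
      - a j i j * D j mu * mui + 2 * D i mu * D j mu * (mui * mui)"

definition laplace_H :: "(nat \<Rightarrow> 'f::comm_ring_1 \<Rightarrow> 'f) \<Rightarrow> (nat \<Rightarrow> nat \<Rightarrow> nat \<Rightarrow> 'f) \<Rightarrow> (nat \<Rightarrow> nat \<Rightarrow> 'f)
    \<Rightarrow> 'f \<Rightarrow> 'f \<Rightarrow> nat \<Rightarrow> nat \<Rightarrow> 'f" where
  "laplace_H D a c mu mui i j =
     D i (Acoef D a mu mui i i j) + Acoef D a mu mui i i j * Acoef D a mu mui j i j
       - Ccoef D a c mu mui i j"

definition laplace_xi :: "(nat \<Rightarrow> 'f::comm_ring_1 \<Rightarrow> 'f) \<Rightarrow> (nat \<Rightarrow> 'm::ab_group_add \<Rightarrow> 'm) \<Rightarrow> ('f \<Rightarrow> 'm \<Rightarrow> 'm)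
    \<Rightarrow> (nat \<Rightarrow> nat \<Rightarrow> nat \<Rightarrow> 'f) \<Rightarrow> 'f \<Rightarrow> 'f \<Rightarrow> nat \<Rightarrow> nat \<Rightarrow> 'm \<Rightarrow> 'm" where
  "laplace_xi D X sm a mu mui i j Th = X j Th + sm (Acoef D a mu mui i i j) Th"

end

theory Submission
  imports Defs "HOL.Modules"
begin

text \<open>Differentiating the (i,j) Laplace transform xi of Theta along X_i and using the equation
  of Theta gives X_i xi = H Theta - A^j_{ij} xi. The transformed equation for xi, rewritten with
  this identity, contains Theta only through the contact forms theta, X_j theta and X_j X_j theta,
  and the last one enters with coefficient (Ahat^j_{ij} - A^j_{ij}) mu. Since the pure contact forms
  are a basis, this coefficient vanishes, so X_i xi + Ahat^j_{ij} xi = H Theta, which is inverted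
  when H is a unit.\<close>

lemma module_ax_additive:
  assumes "module_ax sm"
  shows "additive (sm f)" "additive (\<lambda>f. sm f m)"
  using assms unfolding module_ax_def additive_def by auto

locale form_calculus =
  fixes D :: "nat \<Rightarrow> 'f::comm_ring_1 \<Rightarrow> 'f"
    and X :: "nat \<Rightarrow> 'm::ab_group_add \<Rightarrow> 'm"
    and sm :: "'f \<Rightarrow> 'm \<Rightarrow> 'm"
  assumes module: "module_ax sm"
    and derivations: "form_derivations D X sm"
begin

lemma scale_simps:
  "sm (f + g) m = sm f m + sm g m" "sm f (m + n) = sm f m + sm f n"
  "sm (f * g) m = sm f (sm g m)" "sm 1 m = m"
  "sm 0 m = 0" "sm f 0 = 0" "sm (- f) m = - sm f m" "sm f (- m) = - sm f m"
  "sm (f - g) m = sm f m - sm g m" "sm f (m - n) = sm f m - sm f n"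
  using module additive.zero[OF module_ax_additive(1)[OF module]]
    additive.zero[OF module_ax_additive(2)[OF module]]
    additive.minus[OF module_ax_additive(1)[OF module]]
    additive.minus[OF module_ax_additive(2)[OF module]]
    additive.diff[OF module_ax_additive(1)[OF module]]
    additive.diff[OF module_ax_additive(2)[OF module]]
  unfolding module_ax_def by auto

lemma scale_left_commute: "sm f (sm g m) = sm g (sm f m)"
  by (metis scale_simps(3) mult.commute)

context
  fixes k :: nat
  assumes k: "k \<in> {1,2,3}"
begin

lemma X_add: "X k (m + n) = X k m + X k n"
  using derivations k unfolding form_derivations_def by blast

lemma X_diff: "X k (m - n) = X k m - X k n"
  using additive.diff[of "X k"] X_add by (simp add: additive_def)

lemma X_scale: "X k (sm f m) = sm (D k f) m + sm f (X k m)"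
  using derivations k unfolding form_derivations_def by blast

lemma X_commute: "l \<in> {1,2,3} \<Longrightarrow> X k (X l m) = X l (X k m)"
  using derivations k unfolding form_derivations_def by blast

end

lemma laplace_transform_derivative:
  assumes i: "i \<in> {1,2,3}"
    and eq: "X i (X j T) + sm A (X i T) + sm B (X j T) + sm C T = 0"
  shows "X i (X j T + sm A T) = sm (D i A + A * B - C) T - sm B (X j T + sm A T)"
proof -
  have "X i (X j T) = - (sm A (X i T) + sm B (X j T) + sm C T)"
    using eq by (metis add.assoc eq_neg_iff_add_eq_0)
  then show ?thesis
    by (simp add: X_add[OF i] X_scale[OF i] scale_simps scale_left_commute[of B A] algebra_simps)
qed

definition order1_forms :: "'m \<Rightarrow> nat \<Rightarrow> 'm set" where
  "order1_forms th j = {sm g0 th + sm g1 (X j th) | g0 g1. True}"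

lemma order1_formsI: "sm g0 th + sm g1 (X j th) \<in> order1_forms th j"
  unfolding order1_forms_def by blast

lemma order1_forms_add:
  assumes "m \<in> order1_forms th j" "n \<in> order1_forms th j"
  shows "m + n \<in> order1_forms th j"
proof -
  obtain f0 f1 g0 g1 where "m = sm f0 th + sm f1 (X j th)" "n = sm g0 th + sm g1 (X j th)"
    using assms unfolding order1_forms_def by blast
  then have "m + n = sm (f0 + g0) th + sm (f1 + g1) (X j th)"
    by (simp add: scale_simps algebra_simps)
  then show ?thesis by (simp add: order1_formsI)
qed

lemma order1_forms_scale:
  assumes "m \<in> order1_forms th j"
  shows "sm f m \<in> order1_forms th j"
proof -
  obtain g0 g1 where "m = sm g0 th + sm g1 (X j th)"
    using assms unfolding order1_forms_def by blast
  then have "sm f m = sm (f * g0) th + sm (f * g1) (X j th)"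
    by (simp add: scale_simps)
  then show ?thesis by (simp add: order1_formsI)
qed

lemma order1_forms_diff:
  assumes "m \<in> order1_forms th j" "n \<in> order1_forms th j"
  shows "m - n \<in> order1_forms th j"
  using order1_forms_add[OF assms(1) order1_forms_scale[OF assms(2), of "- 1"]]
  by (simp add: scale_simps)

lemma X_order1_forms:
  assumes j: "j \<in> {1,2,3}"
  shows "X j (sm g0 th + sm g1 (X j th)) - sm g1 (X j (X j th)) \<in> order1_forms th j"
proof -
  have "X j (sm g0 th + sm g1 (X j th)) - sm g1 (X j (X j th))
      = sm (D j g0) th + sm (g0 + D j g1) (X j th)"
    by (simp add: X_add[OF j] X_scale[OF j] scale_simps algebra_simps)
  then show ?thesis by (simp add: order1_formsI)
qed

lemma pure_basis_order2_coefficient: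
  assumes basis: "pure_basis X sm th" and j: "j \<in> {1,2,3}"
    and m: "m \<in> order1_forms th j" and eq: "sm g (X j (X j th)) + m = 0"
  shows "g = 0"
proof -
  obtain g0 g1 where m_eq: "m = sm g0 th + sm g1 (X j th)"
    using m unfolding order1_forms_def by blast
  define S where "S = {(0::nat, 0::nat), (j, 1), (j, 2)}"
  define h where "h I = (if I = (0, 0) then g0 else if I = (j, 1) then g1 else g)" for I :: "nat \<times> nat"
  have j_pos: "j \<noteq> 0" using j by auto
  have S_pure: "finite S" "S \<subseteq> pure_idx"
    using j unfolding S_def pure_idx_def by auto
  have "theta_pure X th (0, 0) = th" "theta_pure X th (j, 1) = X j th"
    "theta_pure X th (j, 2) = X j (X j th)"
    unfolding theta_pure_def by (simp_all add: numeral_2_eq_2)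
  then have "(\<Sum>I\<in>S. sm (h I) (theta_pure X th I)) = sm g (X j (X j th)) + m"
    unfolding S_def h_def m_eq using j_pos by (simp add: algebra_simps)
  then have "h (j, 2) = 0"
    using basis S_pure eq unfolding pure_basis_def S_def by (metis insertCI)
  then show ?thesis unfolding h_def using j_pos by simp
qed

lemma transformed_equation_Xj_coefficient:
  assumes basis: "pure_basis X sm th" and i: "i \<in> {1,2,3}" and j: "j \<in> {1,2,3}"
    and mu_unit: "mu * mui = 1"
    and xi: "xi = X j (sm mu th) + sm A (sm mu th)"
    and Xi_xi: "X i xi = sm H (sm mu th) - sm B xi"
    and xi_eq: "X i (X j xi) + sm Ahat_i (X i xi) + sm Ahat_j (X j xi) + sm Chat xi = 0"
  shows "Ahat_j = B"
proof -
  let ?T = "sm mu th" and ?V = "order1_forms th j"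
  have Xj_T: "X j ?T = sm (D j mu) th + sm mu (X j th)"
    by (simp add: X_scale[OF j])
  have T_V: "?T \<in> ?V" using order1_formsI[of mu th 0 j] by (simp add: scale_simps)
  have Xj_T_V: "X j ?T \<in> ?V" unfolding Xj_T by (rule order1_formsI)
  have xi_expand: "xi = sm (D j mu + A * mu) th + sm mu (X j th)"
    unfolding xi Xj_T by (simp add: scale_simps algebra_simps)
  then have xi_V: "xi \<in> ?V" by (simp add: order1_formsI)
  define w where "w = X j xi - sm mu (X j (X j th))"
  have w_V: "w \<in> ?V" unfolding w_def xi_expand by (rule X_order1_forms[OF j])
  define R where "R = sm (D j H) ?T + sm H (X j ?T) - sm (D j B) xi + sm Ahat_i (X i xi) + sm Chat xi"
  have R_V: "R \<in> ?V"
    unfolding R_def Xi_xi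
    by (intro order1_forms_add order1_forms_diff order1_forms_scale T_V Xj_T_V xi_V)
  have "X i (X j xi) = sm (D j H) ?T + sm H (X j ?T) - (sm (D j B) xi + sm B (X j xi))"
    by (simp add: X_commute[OF i j] Xi_xi X_diff[OF j] X_scale[OF j])
  with xi_eq have "sm (Ahat_j - B) (X j xi) + R = 0"
    unfolding R_def by (simp add: scale_simps algebra_simps)
  then have "sm ((Ahat_j - B) * mu) (X j (X j th)) + (sm (Ahat_j - B) w + R) = 0"
    unfolding w_def by (simp add: scale_simps algebra_simps)
  then have "(Ahat_j - B) * mu = 0"
    using pure_basis_order2_coefficient[OF basis j] order1_forms_add order1_forms_scale w_V R_V
    by blast
  then have "Ahat_j - B = 0"
    using mu_unit by (metis mult.assoc mult_1_right mult_zero_left)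
  then show ?thesis by simp
qed

end

theorem proposition3p7:
  fixes D :: "nat \<Rightarrow> 'f::comm_ring_1 \<Rightarrow> 'f"
    and X :: "nat \<Rightarrow> 'm::ab_group_add \<Rightarrow> 'm"
    and sm :: "'f \<Rightarrow> 'm \<Rightarrow> 'm"
    and th :: 'm and a :: "nat \<Rightarrow> nat \<Rightarrow> nat \<Rightarrow> 'f" and c :: "nat \<Rightarrow> nat \<Rightarrow> 'f"
    and mu mui hinv Ahat_i Ahat_j Chat :: 'f
    and i j :: nat
  assumes setting: "Rinf_setting D X sm th a c"
    and ij: "i \<in> {1,2,3}" "j \<in> {1,2,3}" "i \<noteq> j"
    and mu_unit: "mu * mui = 1"
    and Theta_sys: "\<forall>l\<in>{1,2,3}. \<forall>k\<in>{1,2,3}. l \<noteq> k \<longrightarrow>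
        X l (X k (sm mu th)) + sm (Acoef D a mu mui l l k) (X l (sm mu th))
          + sm (Acoef D a mu mui k l k) (X k (sm mu th)) + sm (Ccoef D a c mu mui l k) (sm mu th) = 0"
    and xi_eq: "X i (X j (laplace_xi D X sm a mu mui i j (sm mu th)))
        + sm Ahat_i (X i (laplace_xi D X sm a mu mui i j (sm mu th)))
        + sm Ahat_j (X j (laplace_xi D X sm a mu mui i j (sm mu th)))
        + sm Chat (laplace_xi D X sm a mu mui i j (sm mu th)) = 0"
    and H_unit: "laplace_H D a c mu mui i j * hinv = 1"
  shows "sm mu th = sm hinv (X i (laplace_xi D X sm a mu mui i j (sm mu th))
                      + sm Ahat_j (laplace_xi D X sm a mu mui i j (sm mu th)))"
proof -
  interpret form_calculus D X sm
    using setting unfolding Rinf_setting_def by unfold_locales auto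
  have basis: "pure_basis X sm th" using setting unfolding Rinf_setting_def by blast
  let ?T = "sm mu th"
  define xi where "xi = laplace_xi D X sm a mu mui i j ?T"
  define A where "A = Acoef D a mu mui i i j"
  define B where "B = Acoef D a mu mui j i j"
  define H where "H = laplace_H D a c mu mui i j"
  have xi_expand: "xi = X j ?T + sm A ?T"
    unfolding xi_def A_def laplace_xi_def ..
  have "X i (X j ?T) + sm A (X i ?T) + sm B (X j ?T) + sm (Ccoef D a c mu mui i j) ?T = 0"
    using Theta_sys ij unfolding A_def B_def by auto
  from laplace_transform_derivative[OF ij(1) this]
  have Xi_xi: "X i xi = sm H ?T - sm B xi"
    unfolding xi_expand H_def A_def B_def laplace_H_def .
  have "Ahat_j = B"
    using transformed_equation_Xj_coefficient[OF basis ij(1,2) mu_unit xi_expand Xi_xi] xi_eq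
    unfolding xi_def by blast
  then have "sm hinv (X i xi + sm Ahat_j xi) = sm (hinv * H) ?T"
    by (simp add: Xi_xi scale_simps)
  also have "\<dots> = ?T" using H_unit unfolding H_def by (simp add: mult.commute scale_simps)
  finally show ?thesis unfolding xi_def by simp
qed

end
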